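(* Let $N\ge3$ and $p>p_S$. There is no function $u\in C^2(0,\infty)$ satisfying \[ u''+\frac{N-1}{s}u'+f(u)=0\ (0<s<\infty),\quad u(s)=As^{-\theta}(1+o(1))\ (s\downarrow0),\quad u(s)\to0\ (s\to\infty),\quad u>0\ \text{on }(0,\infty). \]
   Context: $f(u):=-u+u^p$, $\theta:=\frac{2}{p-1}$, $A:=\{\theta(N-2-\theta)\}^{1/(p-1)}$, $p_S:=\frac{N+2}{N-2}$. *)

theory Defs
  imports "HOL-Analysis.Analysis"
begin

definition fnl :: "real \<Rightarrow> real \<Rightarrow> real" where
  "fnl p u = - u + u powr p"

definition theta :: "real \<Rightarrow> real" where
  "theta p = 2 / (p - 1)"

definition Aconst :: "nat \<Rightarrow> real \<Rightarrow> real" where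
  "Aconst N p = (theta p * (real N - 2 - theta p)) powr (1 / (p - 1))"

definition pS :: "nat \<Rightarrow> real" where
  "pS N = (real N + 2) / (real N - 2)"

end

theory Submission
  imports Defs
begin

text \<open>
  The proof is a Pohozaev identity argument. For a positive solution put
  \<open>E = u'\<^sup>2/2 - u\<^sup>2/2 + u\<^bsup>p+1\<^esup>/(p+1)\<close> and
  \<open>P(s) = s\<^sup>N E(s) + (N-2)/2 s\<^bsup>N-1\<^esup> u u'\<close>; the equation gives
  \<open>P'(s) = s\<^bsup>N-1\<^esup> ((N/(p+1) - (N-2)/2) u\<^bsup>p+1\<^esup> - u\<^sup>2)\<close>, which is negative for
  \<open>p \<ge> p\<^sub>S\<close>, so \<open>P\<close> is strictly decreasing.
  Near \<open>0\<close> the bound \<open>u \<le> 2A s\<^bsup>-\<theta>\<^esup>\<close> and the mean value theorem on \<open>[s, 2s]\<close> give points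
  \<open>X \<in> (s, 2s)\<close> with \<open>P(X) = O(s\<^bsup>N-2-2\<theta>\<^esup>)\<close>, and \<open>N - 2 - 2\<theta> > 0\<close> exactly when
  \<open>p > p\<^sub>S\<close>; hence \<open>P \<le> 0\<close>. Near infinity \<open>u\<close> is eventually decreasing, the flux
  \<open>s\<^bsup>N-1\<^esup> u'\<close> is increasing and bounded, and \<open>u\<close> is controlled by \<open>u'\<close>, so
  \<open>s P(s)\<close> is bounded below; hence \<open>P \<ge> 0\<close>. A strictly decreasing function cannot do both.
\<close>

lemma pS_less_iff:
  assumes "3 \<le> N" shows "pS N < p \<longleftrightarrow> real N + 2 < (real N - 2) * p"
  using assms by (simp add: pS_def divide_less_eq mult.commute)

context
  fixes N :: nat and p :: real
  assumes N: "3 \<le> N" and p: "pS N < p"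
begin

lemma pS_less_exponent: "real N + 2 < (real N - 2) * p"
  using p pS_less_iff[OF N] by blast

lemma pS_less_imp_one_less: "1 < p"
proof (rule ccontr)
  assume "\<not> 1 < p"
  then have "(real N - 2) * p \<le> (real N - 2) * 1" using N by (intro mult_left_mono) auto
  with pS_less_exponent show False by simp
qed

lemma pS_less_imp_supercritical: "real N / (p + 1) < (real N - 2) / 2"
proof -
  have "0 < p + 1" using pS_less_imp_one_less by simp
  with pS_less_exponent show ?thesis by (simp add: field_simps)
qed

lemma pS_less_imp_twice_theta_less: "2 * theta p < real N - 2"
proof -
  have "0 < p - 1" using pS_less_imp_one_less by simp
  with pS_less_exponent show ?thesis by (simp add: theta_def field_simps)
qed

lemma pS_less_imp_Aconst_pos: "0 < Aconst N p"
proof -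
  have "0 < theta p" using pS_less_imp_one_less by (simp add: theta_def)
  with pS_less_imp_twice_theta_less show ?thesis by (simp add: Aconst_def)
qed

end

lemma eventually_le_of_tendsto_ratio:
  fixes f g :: "'a \<Rightarrow> real"
  assumes "0 < A" and "((\<lambda>x. f x / (A * g x)) \<longlongrightarrow> 1) F" and "\<forall>\<^sub>F x in F. 0 < g x"
  shows "\<forall>\<^sub>F x in F. f x \<le> 2 * A * g x"
proof -
  have "\<forall>\<^sub>F x in F. f x / (A * g x) < 2" using assms(2) by (rule order_tendstoD) simp
  with assms(3) show ?thesis
  proof eventually_elim
    case (elim x)
    then show ?case using \<open>0 < A\<close> by (simp add: divide_less_eq)
  qed
qed

lemma mean_value_abs_le:
  fixes f f' :: "real \<Rightarrow> real"
  assumes "a < b" and "\<And>x. a \<le> x \<Longrightarrow> x \<le> b \<Longrightarrow> (f has_real_derivative f' x) (at x)"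
    and "0 \<le> f a" "f a \<le> M" "0 \<le> f b" "f b \<le> M"
  shows "\<exists>x. a < x \<and> x < b \<and> (b - a) * \<bar>f' x\<bar> \<le> M"
proof -
  obtain x where "a < x" "x < b" "f b - f a = (b - a) * f' x"
    using MVT2[OF assms(1,2)] by blast
  moreover have "\<bar>f b - f a\<bar> \<le> M" using assms(3-6) by linarith
  ultimately show ?thesis using \<open>a < b\<close> by (auto simp: abs_mult)
qed

lemma power_mult_scaled_square:
  fixes s c q :: real and N :: nat
  assumes "0 < s" "2 \<le> N"
  shows "s ^ (N - 2) * (c * s powr - q)\<^sup>2 = c\<^sup>2 * s powr (real N - 2 - 2 * q)"
proof -
  have "s ^ (N - 2) = s powr (real N - 2)"
    using assms by (simp add: powr_realpow[symmetric] of_nat_diff)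
  moreover have "(s powr - q)\<^sup>2 = s powr (- 2 * q)"
    using assms by (simp add: power2_eq_square powr_add[symmetric])
  ultimately show ?thesis
    using assms by (simp add: power_mult_distrib powr_add[symmetric])
qed

lemma power_mult_scaled_powr:
  fixes s c p :: real and N :: nat
  assumes "0 < s" "0 < c" "1 < p"
  shows "s ^ N * (c * s powr - theta p) powr (p + 1) = c powr (p + 1) * s powr (real N - 2 - 2 * theta p)"
proof -
  have "theta p * (p + 1) = 2 + 2 * theta p"
    using assms by (simp add: theta_def field_simps)
  then have "(s powr - theta p) powr (p + 1) = s powr (- 2 - 2 * theta p)"
    by (simp add: powr_powr)
  moreover have "s ^ N = s powr real N" using assms by (simp add: powr_realpow)
  moreover have "real N - 2 - 2 * theta p = real N + (- 2 - 2 * theta p)" by simp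
  ultimately show ?thesis
    using assms by (simp only: powr_mult powr_add) simp
qed

locale radial_solution =
  fixes N :: nat and p :: real and u u' u'' :: "real \<Rightarrow> real"
  assumes dim: "2 \<le> N"
    and p_gt_1: "1 < p"
    and u_deriv: "\<And>s. 0 < s \<Longrightarrow> (u has_real_derivative u' s) (at s)"
    and u'_deriv: "\<And>s. 0 < s \<Longrightarrow> (u' has_real_derivative u'' s) (at s)"
    and radial_eq: "\<And>s. 0 < s \<Longrightarrow> u'' s + (real N - 1) / s * u' s + fnl p (u s) = 0"
    and u_pos: "\<And>s. 0 < s \<Longrightarrow> 0 < u s"
begin

lemma radial_eq_mult:
  assumes "0 < s" shows "s * u'' s = s * (u s - u s powr p) - (real N - 1) * u' s"
  using radial_eq[OF assms] assms unfolding fnl_def by (simp add: field_simps)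

definition energy :: "real \<Rightarrow> real" where
  "energy s = (u' s)\<^sup>2 / 2 - (u s)\<^sup>2 / 2 + u s powr (p + 1) / (p + 1)"

definition pohozaev :: "real \<Rightarrow> real" where
  "pohozaev s = s ^ N * energy s + (real N - 2) / 2 * (s ^ (N - 1) * (u s * u' s))"

lemma pohozaev_has_real_derivative:
  assumes s: "0 < s"
  shows "(pohozaev has_real_derivative
     s ^ (N - 1) * ((real N / (p + 1) - (real N - 2) / 2) * u s powr (p + 1) - (u s)\<^sup>2)) (at s)"
proof -
  obtain n where N: "N = n + 2" using dim by (metis add.commute le_Suc_ex)
  define D where "D = s ^ (n + 2) * (u' s * u'' s - u s * u' s + u s powr p * u' s)
    + real (n + 2) * s ^ (n + 2 - 1) * energy s
    + real n / 2 * (s ^ (n + 1) * (u s * u'' s + u' s * u' s) + real (n + 1) * s ^ (n + 1 - 1) * (u s * u' s))"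
  have "(energy has_real_derivative u' s * u'' s - u s * u' s + u s powr p * u' s) (at s)"
    unfolding energy_def[abs_def] using p_gt_1 u_pos[OF s]
    by (auto intro!: derivative_eq_intros u_deriv u'_deriv s)
  moreover have "((\<lambda>z. z ^ k) has_real_derivative real k * s ^ (k - 1)) (at s)" for k
    using DERIV_pow[of k s] by simp
  ultimately have "((\<lambda>s. s ^ (n + 2) * energy s + real n / 2 * (s ^ (n + 1) * (u s * u' s)))
      has_real_derivative D) (at s)"
    unfolding D_def by (intro DERIV_add DERIV_mult' DERIV_cmult u_deriv u'_deriv s)
  moreover have "pohozaev = (\<lambda>s. s ^ (n + 2) * energy s + real n / 2 * (s ^ (n + 1) * (u s * u' s)))"
    unfolding pohozaev_def[abs_def] by (simp add: N)
  \<comment> \<open>The defect is a multiple of the radial equation.\<close>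
  moreover have "D - s ^ (N - 1) * ((real N / (p + 1) - (real N - 2) / 2) * u s powr (p + 1) - (u s)\<^sup>2)
     = s ^ n * (s * u' s + real n / 2 * u s) * (s * u'' s - (s * (u s - u s powr p) - (real n + 1) * u' s))"
    unfolding D_def energy_def N using u_pos[OF s]
    by (simp add: algebra_simps power2_eq_square powr_add add_divide_distrib)
  moreover have "s * u'' s = s * (u s - u s powr p) - (real n + 1) * u' s"
    using radial_eq_mult[OF s] unfolding N by simp
  ultimately show ?thesis by simp
qed

lemma pohozaev_strict_antimono:
  assumes supercritical: "real N / (p + 1) \<le> (real N - 2) / 2" and "0 < a" "a < b"
  shows "pohozaev b < pohozaev a"
proof (rule DERIV_neg_imp_decreasing[OF \<open>a < b\<close>])
  fix x assume "a \<le> x" "x \<le> b"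
  with \<open>0 < a\<close> have x: "0 < x" by simp
  have "(real N / (p + 1) - (real N - 2) / 2) * u x powr (p + 1) \<le> 0"
    using supercritical by (simp add: mult_nonpos_nonneg)
  moreover have "0 < (u x)\<^sup>2" using u_pos[OF x] by simp
  ultimately have "(real N / (p + 1) - (real N - 2) / 2) * u x powr (p + 1) - (u x)\<^sup>2 < 0"
    by linarith
  then have "x ^ (N - 1) * ((real N / (p + 1) - (real N - 2) / 2) * u x powr (p + 1) - (u x)\<^sup>2) < 0"
    using x by (intro mult_pos_neg) auto
  with pohozaev_has_real_derivative[OF x] show "\<exists>y. (pohozaev has_real_derivative y) (at x) \<and> y < 0"
    by blast
qed

lemma pohozaev_le:
  assumes "0 < s"
  shows "pohozaev s \<le> s ^ N * ((u' s)\<^sup>2 / 2 + u s powr (p + 1) / (p + 1))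
    + (real N - 2) / 2 * (s ^ (N - 1) * (u s * \<bar>u' s\<bar>))"
proof -
  have "s ^ N * energy s \<le> s ^ N * ((u' s)\<^sup>2 / 2 + u s powr (p + 1) / (p + 1))"
    unfolding energy_def using assms by (intro mult_left_mono) auto
  moreover have "u s * u' s \<le> u s * \<bar>u' s\<bar>" using u_pos[OF assms] by (intro mult_left_mono) auto
  then have "(real N - 2) / 2 * (s ^ (N - 1) * (u s * u' s)) \<le> (real N - 2) / 2 * (s ^ (N - 1) * (u s * \<bar>u' s\<bar>))"
    using dim assms u_pos[OF assms] by (intro mult_left_mono) auto
  ultimately show ?thesis unfolding pohozaev_def by linarith
qed

lemma pohozaev_ge:
  assumes "0 < s"
  shows "- (s ^ N * (u s)\<^sup>2 / 2 + (real N - 2) / 2 * (s ^ (N - 1) * (u s * \<bar>u' s\<bar>))) \<le> pohozaev s"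
proof -
  have "s ^ N * (- (u s)\<^sup>2 / 2) \<le> s ^ N * energy s"
    unfolding energy_def using assms p_gt_1 by (intro mult_left_mono) auto
  moreover have "- (u s * \<bar>u' s\<bar>) \<le> u s * u' s" using u_pos[OF assms] by (simp add: abs_if)
  then have "(real N - 2) / 2 * (s ^ (N - 1) * (- (u s * \<bar>u' s\<bar>))) \<le> (real N - 2) / 2 * (s ^ (N - 1) * (u s * u' s))"
    using dim assms by (intro mult_left_mono) auto
  ultimately show ?thesis unfolding pohozaev_def by simp
qed

lemma pohozaev_le_scaled:
  assumes s: "0 < s" and X: "0 < X" "X \<le> 2 * s" and M: "u X \<le> M" "s * \<bar>u' X\<bar> \<le> M"
  shows "pohozaev X \<le> 2 ^ N * (real N / 4 * (s ^ (N - 2) * M\<^sup>2) + s ^ N * M powr (p + 1) / (p + 1))"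
proof -
  obtain n where N: "N = n + 2" using dim by (metis add.commute le_Suc_ex)
  have U: "0 < u X" using u_pos[OF X(1)] .
  have X_pow: "X ^ k \<le> 2 ^ k * s ^ k" for k
    using power_mono[OF X(2), of k] X(1) by (simp add: power_mult_distrib)
  have "X ^ N * (u' X)\<^sup>2 \<le> 2 ^ N * s ^ N * (u' X)\<^sup>2"
    using X_pow by (intro mult_right_mono) auto
  also have "\<dots> = 2 ^ N * s ^ n * (s * \<bar>u' X\<bar>)\<^sup>2"
    unfolding N by (simp add: power_mult_distrib power_add power2_eq_square)
  also have "\<dots> \<le> 2 ^ N * s ^ n * M\<^sup>2"
    using M s by (intro mult_left_mono power_mono) auto
  finally have kinetic: "X ^ N * (u' X)\<^sup>2 \<le> 2 ^ N * s ^ n * M\<^sup>2" .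
  have "u X powr (p + 1) \<le> M powr (p + 1)"
    using U M p_gt_1 by (intro powr_mono2) auto
  then have potential: "X ^ N * u X powr (p + 1) \<le> 2 ^ N * s ^ N * M powr (p + 1)"
    using X_pow X(1) s by (intro mult_mono) auto
  have "X ^ (N - 1) * (u X * \<bar>u' X\<bar>) \<le> 2 ^ (n + 1) * s ^ (n + 1) * (u X * \<bar>u' X\<bar>)"
    using X_pow[of "n + 1"] U unfolding N by (intro mult_right_mono) auto
  also have "\<dots> = 2 ^ (n + 1) * s ^ n * (u X * (s * \<bar>u' X\<bar>))" by simp
  also have "\<dots> \<le> 2 ^ (n + 1) * s ^ n * (M * M)"
    using U M s by (intro mult_left_mono mult_mono) auto
  finally have mixed: "X ^ (N - 1) * (u X * \<bar>u' X\<bar>) \<le> 2 ^ (n + 1) * s ^ n * M\<^sup>2"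
    by (simp add: power2_eq_square)
  have "pohozaev X \<le> X ^ N * (u' X)\<^sup>2 / 2 + X ^ N * u X powr (p + 1) / (p + 1)
      + real n / 2 * (X ^ (N - 1) * (u X * \<bar>u' X\<bar>))"
    using pohozaev_le[OF X(1)] unfolding N by (simp add: algebra_simps add_divide_distrib)
  also have "\<dots> \<le> 2 ^ N * s ^ n * M\<^sup>2 / 2 + 2 ^ N * s ^ N * M powr (p + 1) / (p + 1)
      + real n / 2 * (2 ^ (n + 1) * s ^ n * M\<^sup>2)"
    using kinetic potential mixed p_gt_1
    by (intro add_mono divide_right_mono mult_left_mono) auto
  also have "\<dots> = 2 ^ N * (real N / 4 * (s ^ (N - 2) * M\<^sup>2) + s ^ N * M powr (p + 1) / (p + 1))"
    unfolding N by (simp add: field_simps)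
  finally show ?thesis .
qed

lemma eventually_pohozaev_small_at_0:
  assumes c: "0 < c" and growth: "\<forall>\<^sub>F s in at_right 0. u s \<le> c * s powr - theta p"
  shows "\<exists>K. \<forall>\<^sub>F s in at_right 0.
           \<exists>X. s < X \<and> X < 2 * s \<and> pohozaev X \<le> K * s powr (real N - 2 - 2 * theta p)"
proof -
  define e where "e = real N - 2 - 2 * theta p"
  have theta_pos: "0 < theta p" using p_gt_1 by (simp add: theta_def)
  obtain b where b: "0 < b" and ub: "\<And>y. 0 < y \<Longrightarrow> y < b \<Longrightarrow> u y \<le> c * y powr - theta p"
    using growth unfolding eventually_at_right_field by auto
  define K where "K = 2 ^ N * (real N / 4 * c\<^sup>2 + c powr (p + 1) / (p + 1))"
  have small: "\<exists>X. s < X \<and> X < 2 * s \<and> pohozaev X \<le> K * s powr e"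
    if s: "0 < s" "s < b / 2" for s
  proof -
    define M where "M = c * s powr - theta p"
    have u_le_M: "u y \<le> M" if "s \<le> y" "y \<le> 2 * s" for y
    proof -
      have "u y \<le> c * y powr - theta p" using ub that s by simp
      also have "\<dots> \<le> M"
        unfolding M_def using that s c theta_pos by (intro mult_left_mono powr_mono2') auto
      finally show ?thesis .
    qed
    obtain X where X: "s < X" "X < 2 * s" and slope: "(2 * s - s) * \<bar>u' X\<bar> \<le> M"
      using mean_value_abs_le[of s "2 * s" u u' M] s u_le_M u_pos u_deriv
      by (auto simp: less_imp_le)
    have "s ^ (N - 2) * M\<^sup>2 = c\<^sup>2 * s powr e"
      unfolding M_def e_def using s(1) dim by (rule power_mult_scaled_square)
    moreover have "s ^ N * M powr (p + 1) = c powr (p + 1) * s powr e"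
      unfolding M_def e_def using s(1) c p_gt_1 by (rule power_mult_scaled_powr)
    moreover have "pohozaev X \<le> 2 ^ N * (real N / 4 * (s ^ (N - 2) * M\<^sup>2) + s ^ N * M powr (p + 1) / (p + 1))"
      using pohozaev_le_scaled[of s X M] s X slope u_le_M[of X] by auto
    ultimately have "pohozaev X \<le> K * s powr e"
      unfolding K_def by (simp add: algebra_simps)
    then show ?thesis using X by blast
  qed
  have "\<forall>\<^sub>F s in at_right 0. 0 < s \<and> s < b / 2"
    using b by (auto simp: eventually_at_right_field intro!: exI[of _ "b / 2"])
  then have "\<forall>\<^sub>F s in at_right 0. \<exists>X. s < X \<and> X < 2 * s \<and> pohozaev X \<le> K * s powr e"
    by (rule eventually_mono) (use small in blast)
  then show ?thesis unfolding e_def by blast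
qed

lemma pohozaev_nonpos:
  assumes supercritical: "real N / (p + 1) \<le> (real N - 2) / 2"
    and exponent: "2 * theta p < real N - 2"
    and "0 < c" and growth: "\<forall>\<^sub>F s in at_right 0. u s \<le> c * s powr - theta p"
    and t: "0 < t"
  shows "pohozaev t \<le> 0"
proof -
  define e where "e = real N - 2 - 2 * theta p"
  obtain K where small: "\<forall>\<^sub>F s in at_right 0. \<exists>X. s < X \<and> X < 2 * s \<and> pohozaev X \<le> K * s powr e"
    using eventually_pohozaev_small_at_0[OF \<open>0 < c\<close> growth] unfolding e_def by blast
  have "\<forall>\<^sub>F s in at_right 0. 0 < s \<and> s < t / 2"
    using t by (auto simp: eventually_at_right_field intro!: exI[of _ "t / 2"])
  with small have "\<forall>\<^sub>F s in at_right 0. pohozaev t \<le> K * s powr e"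
  proof (rule eventually_elim2)
    fix s assume "\<exists>X. s < X \<and> X < 2 * s \<and> pohozaev X \<le> K * s powr e" and s: "0 < s \<and> s < t / 2"
    then obtain X where "s < X" "X < 2 * s" "pohozaev X \<le> K * s powr e" by blast
    with s show "pohozaev t \<le> K * s powr e"
      using pohozaev_strict_antimono[OF supercritical, of X t] by linarith
  qed
  moreover have "((\<lambda>s. K * s powr e) \<longlongrightarrow> K * 0) (at_right 0)"
    using exponent unfolding e_def
    by (intro tendsto_intros tendsto_zero_powrI) (auto intro: tendsto_ident_at eventually_at_rightI[of 0 1])
  ultimately show ?thesis
    by (intro tendsto_le[OF trivial_limit_at_right_real]) auto
qed

definition flux :: "real \<Rightarrow> real" where
  "flux t = t ^ (N - 1) * u' t"

lemma flux_has_real_derivative: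
  assumes t: "0 < t"
  shows "(flux has_real_derivative t ^ (N - 1) * (u t - u t powr p)) (at t)"
proof -
  obtain n where N: "N = n + 2" using dim by (metis add.commute le_Suc_ex)
  have flux_eq: "flux = (\<lambda>t. t ^ (n + 1) * u' t)" unfolding flux_def[abs_def] by (simp add: N)
  have "(flux has_real_derivative t ^ (n + 1) * u'' t + real (n + 1) * t ^ (n + 1 - Suc 0) * u' t) (at t)"
    unfolding flux_eq by (rule DERIV_mult'[OF DERIV_pow u'_deriv[OF t]])
  also have "t ^ (n + 1) * u'' t + real (n + 1) * t ^ (n + 1 - Suc 0) * u' t = t ^ n * (t * u'' t + (real N - 1) * u' t)"
    unfolding N by (simp add: algebra_simps)
  also have "\<dots> = t ^ (N - 1) * (u t - u t powr p)"
    unfolding radial_eq_mult[OF t] N by (simp add: algebra_simps)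
  finally show ?thesis .
qed

context
  assumes decay: "(u \<longlongrightarrow> 0) at_top"
begin

lemma eventually_half_le_u_minus_powr: "\<forall>\<^sub>F t in at_top. u t / 2 \<le> u t - u t powr p"
proof -
  have "((\<lambda>t. u t powr (p - 1)) \<longlongrightarrow> 0) at_top"
    using p_gt_1
    by (intro tendsto_zero_powrI[OF decay tendsto_const])
      (auto intro!: eventually_at_top_linorderI[of 1] less_imp_le[OF u_pos])
  then have "\<forall>\<^sub>F t in at_top. u t powr (p - 1) < 1 / 2" by (rule order_tendstoD) simp
  moreover have "\<forall>\<^sub>F t in at_top. 0 < (t :: real)" by (rule eventually_gt_at_top)
  ultimately show ?thesis
  proof eventually_elim
    case (elim t)
    have "u t powr p = u t * u t powr (p - 1)"
      using u_pos[OF elim(2)] by (simp add: powr_mult_base)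
    also have "\<dots> \<le> u t / 2" using elim u_pos[OF elim(2)] by simp
    finally show ?case by simp
  qed
qed

context
  fixes T :: real
  assumes T_pos: "0 < T" and half_le: "\<And>t. T \<le> t \<Longrightarrow> u t / 2 \<le> u t - u t powr p"
begin

lemma flux_strict_mono:
  assumes "T \<le> a" "a < b" shows "flux a < flux b"
proof (rule DERIV_pos_imp_increasing[OF \<open>a < b\<close>])
  fix x assume "a \<le> x"
  with \<open>T \<le> a\<close> have x: "0 < x" "T \<le> x" using T_pos by auto
  have "0 < x ^ (N - 1) * (u x - u x powr p)"
    using half_le[OF x(2)] u_pos[OF x(1)] x(1) by (intro mult_pos_pos) auto
  with flux_has_real_derivative[OF x(1)] show "\<exists>y. (flux has_real_derivative y) (at x) \<and> 0 < y"
    by blast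
qed

lemma u'_nonpos:
  assumes t: "T \<le> t" shows "u' t \<le> 0"
proof (rule ccontr)
  assume "\<not> u' t \<le> 0"
  have t0: "0 < t" using t T_pos by simp
  have "0 < u' y" if "t \<le> y" for y
  proof -
    have "0 < flux t" using \<open>\<not> u' t \<le> 0\<close> t0 by (simp add: flux_def)
    also have "flux t \<le> flux y" using flux_strict_mono[OF t, of y] that by (cases "t = y") auto
    finally show ?thesis using t0 that by (simp add: flux_def zero_less_mult_iff)
  qed
  then have mono: "u t \<le> u y" if "t \<le> y" for y
    using that t0 by (intro DERIV_nonneg_imp_nondecreasing[OF that]) (auto intro!: exI u_deriv less_imp_le)
  have "\<forall>\<^sub>F y in at_top. u y < u t" using order_tendstoD(2)[OF decay u_pos[OF t0]] .
  then obtain y where "t \<le> y" "u y < u t" by (metis eventually_at_top_linorder nle_le)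
  with mono show False by fastforce
qed

lemma u_antimono:
  assumes "T \<le> x" "x \<le> y" shows "u y \<le> u x"
proof (rule DERIV_nonpos_imp_nonincreasing[OF \<open>x \<le> y\<close>])
  fix z assume "x \<le> z"
  then have "T \<le> z" "0 < z" using assms T_pos by auto
  then show "\<exists>d. (u has_real_derivative d) (at z) \<and> d \<le> 0" using u_deriv u'_nonpos by blast
qed

lemma abs_u'_le_flux:
  assumes "T \<le> t" shows "t ^ (N - 1) * \<bar>u' t\<bar> \<le> - flux T"
proof -
  have "flux T \<le> flux t" using flux_strict_mono[of T t] assms by (cases "t = T") auto
  then show ?thesis using u'_nonpos[OF assms] by (simp add: flux_def abs_of_nonpos)
qed

lemma u_le_abs_u'_shift:
  assumes t: "T + 1 \<le> t" shows "u t \<le> 2 * \<bar>u' (t - 1)\<bar>"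
proof -
  have "(u' has_real_derivative u'' x) (at x)" if "t - 1 \<le> x" for x
    using that t T_pos by (intro u'_deriv) linarith
  then obtain \<xi> where \<xi>: "t - 1 < \<xi>" "\<xi> < t" and mvt: "u' t - u' (t - 1) = (t - (t - 1)) * u'' \<xi>"
    using MVT2[of "t - 1" t u' u''] by auto
  have \<xi>0: "0 < \<xi>" and \<xi>T: "T \<le> \<xi>" using \<xi> t T_pos by auto
  have "u t / 2 \<le> u \<xi> / 2" using u_antimono[OF \<xi>T] \<xi> by simp
  also have "\<dots> \<le> u \<xi> - u \<xi> powr p" by (rule half_le[OF \<xi>T])
  also have "\<dots> \<le> u'' \<xi>"
  proof -
    have "0 \<le> - ((real N - 1) * u' \<xi>)"
      using u'_nonpos[OF \<xi>T] dim by (simp add: mult_nonneg_nonpos)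
    then have "\<xi> * (u \<xi> - u \<xi> powr p) \<le> \<xi> * u'' \<xi>"
      using radial_eq_mult[OF \<xi>0] by linarith
    then show ?thesis using \<xi>0 by simp
  qed
  finally have "u t \<le> 2 * (u' t - u' (t - 1))" using mvt by simp
  then show ?thesis using u'_nonpos[of t] u'_nonpos[of "t - 1"] t by simp
qed

lemma power_u_le_flux:
  assumes t: "T + 1 \<le> t" "2 \<le> t" shows "t ^ (N - 1) * u t \<le> 2 ^ N * - flux T"
proof -
  have "t ^ (N - 1) \<le> (2 * (t - 1)) ^ (N - 1)" using t by (intro power_mono) auto
  then have "t ^ (N - 1) \<le> 2 ^ (N - 1) * (t - 1) ^ (N - 1)" by (simp only: power_mult_distrib)
  then have "t ^ (N - 1) * u t \<le> 2 ^ (N - 1) * (t - 1) ^ (N - 1) * (2 * \<bar>u' (t - 1)\<bar>)"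
    using u_le_abs_u'_shift[OF t(1)] u_pos[of t] t
    by (intro mult_mono) auto
  also have "\<dots> = 2 ^ N * ((t - 1) ^ (N - 1) * \<bar>u' (t - 1)\<bar>)"
    using dim by (simp add: power_eq_if[of 2 N])
  also have "\<dots> \<le> 2 ^ N * - flux T" using abs_u'_le_flux[of "t - 1"] t by (intro mult_left_mono) auto
  finally show ?thesis .
qed

lemma pohozaev_lower_bound:
  assumes "3 \<le> N" and t: "T + 1 \<le> t" "2 \<le> t"
  shows "- (2 ^ N * (2 ^ N + real N - 2) / 2 * (flux T)\<^sup>2) \<le> t * pohozaev t"
proof -
  define C where "C = - flux T"
  have t0: "0 < t" using t by simp
  have U: "0 \<le> t ^ (N - 1) * u t" "t ^ (N - 1) * u t \<le> 2 ^ N * C"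
    using u_pos[OF t0] t0 power_u_le_flux[OF t] by (auto simp: C_def)
  have V: "t ^ (N - 1) * \<bar>u' t\<bar> \<le> C" using abs_u'_le_flux[of t] t T_pos by (simp add: C_def)
  have "t * (t ^ N * (u t)\<^sup>2) \<le> (t ^ (N - 1) * u t)\<^sup>2"
  proof -
    have "t * t ^ N \<le> t ^ (N - 1) * t ^ (N - 1)"
      unfolding power_Suc[symmetric] power_add[symmetric] using t assms(1) by (intro power_increasing) auto
    then have "t * t ^ N * (u t)\<^sup>2 \<le> t ^ (N - 1) * t ^ (N - 1) * (u t)\<^sup>2"
      by (rule mult_right_mono) simp
    then show ?thesis by (simp add: power2_eq_square mult_ac)
  qed
  also have "\<dots> \<le> (2 ^ N * C)\<^sup>2" using U by (intro power_mono) auto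
  finally have sq: "t * (t ^ N * (u t)\<^sup>2) \<le> (2 ^ N * C)\<^sup>2" .
  have "t * (t ^ (N - 1) * (u t * \<bar>u' t\<bar>)) \<le> t ^ (N - 1) * (t ^ (N - 1) * (u t * \<bar>u' t\<bar>))"
    using power_increasing[of 1 "N - 1" t] t assms(1) u_pos[OF t0] by (intro mult_right_mono) auto
  also have "\<dots> = (t ^ (N - 1) * u t) * (t ^ (N - 1) * \<bar>u' t\<bar>)" by (simp add: mult_ac)
  also have "\<dots> \<le> (2 ^ N * C) * C" using U V t0 by (intro mult_mono[OF U(2) V]) auto
  finally have mixed: "t * (t ^ (N - 1) * (u t * \<bar>u' t\<bar>)) \<le> 2 ^ N * C * C" .
  have "- (t * (t ^ N * (u t)\<^sup>2) / 2 + (real N - 2) / 2 * (t * (t ^ (N - 1) * (u t * \<bar>u' t\<bar>))))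
      \<le> t * pohozaev t"
    using mult_left_mono[OF pohozaev_ge[OF t0], of t] t0 by (simp add: algebra_simps)
  moreover have "t * (t ^ N * (u t)\<^sup>2) / 2 + (real N - 2) / 2 * (t * (t ^ (N - 1) * (u t * \<bar>u' t\<bar>)))
      \<le> (2 ^ N * C)\<^sup>2 / 2 + (real N - 2) / 2 * (2 ^ N * C * C)"
    using sq mixed assms(1) by (intro add_mono divide_right_mono mult_left_mono) auto
  moreover have "(2 ^ N * C)\<^sup>2 / 2 + (real N - 2) / 2 * (2 ^ N * C * C)
      = 2 ^ N * (2 ^ N + real N - 2) / 2 * (flux T)\<^sup>2"
    unfolding C_def by (simp add: power2_eq_square field_simps)
  ultimately show ?thesis by linarith
qed

end

lemma eventually_pohozaev_lower_bound:
  assumes "3 \<le> N" shows "\<exists>K. \<forall>\<^sub>F t in at_top. - K \<le> t * pohozaev t"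
proof -
  obtain T0 where T0: "\<And>t. T0 \<le> t \<Longrightarrow> u t / 2 \<le> u t - u t powr p"
    using eventually_half_le_u_minus_powr unfolding eventually_at_top_linorder by blast
  define T where "T = max T0 1"
  have "0 < T" "\<And>t. T \<le> t \<Longrightarrow> u t / 2 \<le> u t - u t powr p" using T0 by (auto simp: T_def)
  then have "\<forall>\<^sub>F t in at_top. - (2 ^ N * (2 ^ N + real N - 2) / 2 * (flux T)\<^sup>2) \<le> t * pohozaev t"
    using pohozaev_lower_bound[of T] assms by (intro eventually_at_top_linorderI[of "max (T + 1) 2"]) auto
  then show ?thesis by blast
qed

lemma pohozaev_nonneg:
  assumes supercritical: "real N / (p + 1) \<le> (real N - 2) / 2" and "3 \<le> N" and t: "0 < t"
  shows "0 \<le> pohozaev t"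
proof -
  obtain K where lower: "\<forall>\<^sub>F s in at_top. - K \<le> s * pohozaev s"
    using eventually_pohozaev_lower_bound[OF \<open>3 \<le> N\<close>] by blast
  have "\<forall>\<^sub>F s in at_top. - K / s \<le> pohozaev t"
    using lower eventually_gt_at_top[of t]
  proof eventually_elim
    case (elim s)
    then have "- K / s \<le> pohozaev s" using t by (simp add: field_simps)
    also have "\<dots> < pohozaev t" using pohozaev_strict_antimono[OF supercritical t] elim by simp
    finally show ?case by simp
  qed
  moreover have "((\<lambda>s. - K / s) \<longlongrightarrow> 0) at_top"
    by (intro tendsto_divide_0[OF tendsto_const] filterlim_at_top_imp_at_infinity filterlim_ident)
  ultimately show ?thesis
    by (intro tendsto_le[OF trivial_limit_at_top_linorder tendsto_const]) auto
qed

end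

end

lemma (in radial_solution) no_singular_decaying_solution:
  assumes N: "3 \<le> N" and p: "pS N < p"
    and singular: "((\<lambda>s. u s / (Aconst N p * s powr - theta p)) \<longlongrightarrow> 1) (at_right 0)"
    and decay: "(u \<longlongrightarrow> 0) at_top"
  shows False
proof -
  have supercritical: "real N / (p + 1) \<le> (real N - 2) / 2"
    using pS_less_imp_supercritical[OF N p] by simp
  have A: "0 < Aconst N p" by (rule pS_less_imp_Aconst_pos[OF N p])
  have "\<forall>\<^sub>F s in at_right 0. 0 < s powr - theta p"
    by (rule eventually_mono[OF eventually_at_right_less]) simp
  then have "\<forall>\<^sub>F s in at_right 0. u s \<le> 2 * Aconst N p * s powr - theta p"
    by (rule eventually_le_of_tendsto_ratio[OF A singular])
  then have "pohozaev 1 \<le> 0"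
    using A by (intro pohozaev_nonpos[OF supercritical pS_less_imp_twice_theta_less[OF N p]]) auto
  moreover have "0 \<le> pohozaev 2" using pohozaev_nonneg[OF decay supercritical N] by simp
  moreover have "pohozaev 2 < pohozaev 1" using pohozaev_strict_antimono[OF supercritical] by simp
  ultimately show False by linarith
qed

theorem lemma4p7:
  fixes N :: nat and p :: real
  assumes "N \<ge> 3" and "p > pS N"
  shows "\<not> (\<exists>u u' u'' :: real \<Rightarrow> real.
            (\<forall>s>0. (u has_real_derivative u' s) (at s)) \<and>
            (\<forall>s>0. (u' has_real_derivative u'' s) (at s)) \<and>
            continuous_on {0<..} u'' \<and>
            (\<forall>s>0. u'' s + (real N - 1) / s * u' s + fnl p (u s) = 0) \<and>
            ((\<lambda>s. u s / (Aconst N p * s powr (- theta p))) \<longlongrightarrow> 1) (at_right 0) \<and>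
            (u \<longlongrightarrow> 0) at_top \<and>
            (\<forall>s>0. u s > 0))"
proof -
  have "2 \<le> N" "1 < p" using assms pS_less_imp_one_less[OF assms] by auto
  then show ?thesis
    using radial_solution.no_singular_decaying_solution[OF _ assms]
    unfolding radial_solution_def by blast
qed

end
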